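(* Let $q$ be a prime power, let $\chi'$ be the canonical additive character of $\mathbb{F}_{q^2}$, and for integers $e_1,e_2$ and $a,b\in\mathbb{F}_{q^2}$ define $$T_{(e_1,e_2)}(a,b):=\sum_{y\in\mathbb{F}_q^*}\sum_{x\in\mathbb{F}_{q^2}^*}\chi'\!\left(ya x^{(q+1)e_1}+yb x^{e_2}\right).$$ If $\gcd(q-1,2e_1-e_2)=1$ and $\gcd(q+1,e_2)=1$, then $$T_{(e_1,e_2)}(a,b)=\begin{cases}(q-1)(q^2-1) & \text{if } a=0 \text{ and } b=0,\\ -(q^2-1) & \text{if } a^q+a\neq 0 \text{ and } b=0,\\ -(q-1) & \text{if } a^q+a=0 \text{ and } b\neq 0,\\ 1 & \text{if } a^q+a\neq 0 \text{ and } b\neq 0.\end{cases}$$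
   Context: For a finite field $F$ of characteristic $p$, the canonical additive character is $\chi(c)=e^{2\pi i\,\mathrm{Tr}_{F/\mathbb{F}_p}(c)/p}$. *)

theory Defs
  imports "HOL-Analysis.Analysis"
begin

definition ff_degree :: "'a::{field,finite} itself \<Rightarrow> nat" where
  "ff_degree _ = (THE n. CHAR('a) ^ n = CARD('a))"

definition abs_trace :: "'a::{field,finite} \<Rightarrow> 'a" where
  "abs_trace c = (\<Sum>i<ff_degree TYPE('a). c ^ (CHAR('a) ^ i))"

text \<open>Canonical additive character chi(c) = exp(2 pi i Tr(c)/p), where the trace
  (lying in the prime field) is identified with the integer k in {0..p-1}
  with of_nat k = Tr(c).\<close>
definition can_add_char :: "'a::{field,finite} \<Rightarrow> complex" where
  "can_add_char c =
     (let k = (THE k. k < CHAR('a) \<and> of_nat k = abs_trace c)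
      in exp (2 * pi * \<i> * of_nat k / of_nat CHAR('a)))"

text \<open>T_{(e1,e2)}(a,b) over F_{q^2} (the type 'a, with CARD('a) = q^2);
  F_q^* is the set of nonzero y with y^q = y.\<close>
definition T_sum :: "nat \<Rightarrow> int \<Rightarrow> int \<Rightarrow> 'a::{field,finite} \<Rightarrow> 'a \<Rightarrow> complex" where
  "T_sum q e1 e2 a b =
     (\<Sum>y\<in>{y::'a. y ^ q = y \<and> y \<noteq> 0}. \<Sum>x\<in>{x::'a. x \<noteq> 0}.
        can_add_char (y * a * x powi ((int q + 1) * e1) + y * b * x powi e2))"

end

theory Submission
  imports Defs "HOL-Computational_Algebra.Computational_Algebra" "HOL-Number_Theory.Cong"
begin

(* The substitution (y, x) |-> (y x^((q+1) e1), y x^e2) is an endomorphism of the group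
   F_q^* x F_(q^2)^*; the two gcd conditions make its kernel trivial, so it is a bijection and
   T(a, b) splits into the product of the character sums over u in F_q^* of chi'(u a) and over
   v in F_(q^2)^* of chi'(v b). A character sum over an additive subgroup is its size if chi'
   is trivial on it and 0 otherwise. For u in F_q the absolute trace of u a equals the trace
   of u (a + a^q) over F_q, and the additive polynomials involved have too few roots to vanish
   on a whole subgroup; hence the first factor is q - 1 or -1 according as a^q + a = 0, and the
   second is q^2 - 1 or -1 according as b = 0. *)

lemma of_nat_CARD_eq_0: "of_nat CARD('a::{ring_1,finite}) = (0::'a)"
proof -
  have "(\<Sum>x\<in>UNIV. x) = (\<Sum>x\<in>UNIV. x + (1::'a))"
    by (rule sum.reindex_bij_witness[of _ "\<lambda>y. y + 1" "\<lambda>y. y - 1"]) auto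
  then show ?thesis
    by (simp add: sum.distrib)
qed

text \<open>The library's \<open>finite_field_power_card_eq_same\<close> requires the sort \<open>finite_field\<close>.\<close>
lemma power_CARD_eq_self: "(x::'a::{field,finite}) ^ CARD('a) = x"
proof (cases "x = 0")
  case False
  let ?U = "UNIV - {0::'a}"
  have "(\<Prod>y\<in>?U. x * y) = (\<Prod>y\<in>?U. y)"
    by (rule prod.reindex_bij_witness[of _ "\<lambda>y. y / x" "\<lambda>y. x * y"]) (use False in auto)
  moreover have "(\<Prod>y\<in>?U. y) \<noteq> 0"
    by simp
  ultimately have "x ^ (CARD('a) - 1) = 1"
    by (simp add: prod.distrib)
  moreover have "x ^ CARD('a) = x * x ^ (CARD('a) - 1)"
    using finite_UNIV_card_ge_0[where 'a='a] by (simp add: power_eq_if)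
  ultimately show ?thesis
    by simp
next
  case True
  then show ?thesis
    using finite_UNIV_card_ge_0[where 'a='a] by simp
qed

lemma CHAR_eq_prime_of_CARD_eq_power:
  assumes "prime p" "CARD('a::{field,finite}) = p ^ n"
  shows "CHAR('a) = p"
proof -
  have "(of_nat p :: 'a) ^ n = 0"
    using of_nat_CARD_eq_0[where 'a='a] assms(2) by simp
  then have "(of_nat p :: 'a) = 0"
    by simp
  then have "CHAR('a) dvd p"
    by (simp add: of_nat_eq_0_iff_char_dvd)
  then show ?thesis
    using assms(1) CHAR_not_1[where 'a='a] by (metis prime_nat_iff One_nat_def)
qed

lemma card_roots_power_plus_linear_le:
  fixes c :: "'a::field"
  assumes "n \<ge> 2"
  shows "card {z. z ^ n + c * z = 0} \<le> n"
proof -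
  define P where "P = monom (1::'a) n + [:0, c:]"
  have "coeff P n = 1"
    using assms by (simp add: P_def coeff_pCons split: nat.split)
  moreover have "degree P \<le> n"
    unfolding P_def using assms by (intro degree_add_le) (auto simp: degree_monom_le)
  moreover have "{z. z ^ n + c * z = 0} = {z. poly P z = 0}"
    by (simp add: P_def poly_monom mult.commute)
  moreover have "P \<noteq> 0"
    using \<open>coeff P n = 1\<close> by auto
  ultimately show ?thesis
    using card_poly_roots_bound[of P] by simp
qed

lemma sum_lessThan_add:
  fixes f :: "nat \<Rightarrow> 'a::comm_monoid_add"
  shows "(\<Sum>i<k + n. f i) = (\<Sum>i<k. f i) + (\<Sum>i<n. f (k + i))"
  by (induction n) (simp_all add: add_ac)

lemma power_int_eq_1_coprime:
  assumes "(z::'a::field) \<noteq> 0" "gcd i j = 1" "z powi i = 1" "z powi j = 1"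
  shows "z = 1"
proof -
  obtain u v where "u * i + v * j = 1"
    using bezout_int[of i j] assms(2) by auto
  then have "z = z powi (i * u) * z powi (j * v)"
    using assms(1) by (simp add: power_int_add [symmetric] mult.commute)
  also have "\<dots> = 1"
    by (simp add: power_int_mult assms(3,4))
  finally show ?thesis .
qed

lemma power_pred_eq_1:
  assumes "(t::'a::field) ^ n = t" "t \<noteq> 0" "n > 0"
  shows "t ^ (n - 1) = 1"
proof -
  have "t * t ^ (n - 1) = t * 1"
    using assms by (simp flip: power_Suc)
  then show ?thesis
    using assms(2) by simp
qed

locale prime_power_field =
  fixes p n :: nat and field_type :: "'a::{field,finite} itself"
  assumes prime_p: "prime p" and CARD_eq: "CARD('a) = p ^ n"
begin

lemma p_ge_2: "p \<ge> 2"
  using prime_p prime_ge_2_nat by blast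

lemma CHAR_eq: "CHAR('a) = p"
  using CHAR_eq_prime_of_CARD_eq_power[OF prime_p CARD_eq] .

lemma degree_pos: "n > 0"
  using of_nat_CARD_eq_0[where 'a='a] CARD_eq by (cases n) auto

lemma ff_degree_eq: "ff_degree TYPE('a) = n"
  unfolding ff_degree_def CHAR_eq CARD_eq
  using p_ge_2 by (intro the_equality) (simp_all add: power_inject_exp)

lemma abs_trace_eq: "abs_trace (c::'a) = (\<Sum>i<n. c ^ (p ^ i))"
  unfolding abs_trace_def ff_degree_eq CHAR_eq ..

lemma power_p_power_add: "((x::'a) + y) ^ (p ^ i) = x ^ (p ^ i) + y ^ (p ^ i)"
  by (rule freshmans_dream') (simp_all add: CHAR_eq prime_p)

lemma power_p_power_sum: "(sum (f::'b \<Rightarrow> 'a) A) ^ (p ^ i) = (\<Sum>j\<in>A. f j ^ (p ^ i))"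
  by (rule freshmans_dream_sum') (simp_all add: CHAR_eq prime_p)

lemma power_p_power_diff: "((x::'a) - y) ^ (p ^ i) = x ^ (p ^ i) - y ^ (p ^ i)"
  using power_p_power_add[of "x - y" y] by (simp add: algebra_simps)

lemma power_p_power_n_eq_self: "(x::'a) ^ (p ^ n) = x"
  using power_CARD_eq_self[of x] by (simp add: CARD_eq)

lemma abs_trace_0: "abs_trace (0::'a) = 0"
  using p_ge_2 by (simp add: abs_trace_eq power_0_left)

lemma abs_trace_add: "abs_trace ((x::'a) + y) = abs_trace x + abs_trace y"
  unfolding abs_trace_eq power_p_power_add by (simp add: sum.distrib)

lemma abs_trace_power_p: "abs_trace (c::'a) ^ p = abs_trace c"
proof -
  have "abs_trace c ^ p = (\<Sum>i<n. c ^ (p ^ Suc i))"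
    using power_p_power_sum[of "\<lambda>i. c ^ (p ^ i)" "{..<n}" 1]
    by (simp add: abs_trace_eq power_mult [symmetric] mult.commute)
  also have "\<dots> = abs_trace c"
    using sum.lessThan_Suc_shift[of "\<lambda>i. c ^ (p ^ i)" n] sum.lessThan_Suc[of "\<lambda>i. c ^ (p ^ i)" n]
    by (simp add: abs_trace_eq power_p_power_n_eq_self)
  finally show ?thesis .
qed

lemma of_nat_power_p: "(of_nat k :: 'a) ^ p = of_nat k"
proof (induction k)
  case 0
  then show ?case
    using p_ge_2 by simp
next
  case (Suc k)
  then show ?case
    using power_p_power_add[of "of_nat k" 1 1] by (simp add: add.commute)
qed

lemma power_p_eq_self_iff: "(z::'a) ^ p = z \<longleftrightarrow> z \<in> of_nat ` {..<p}"
proof -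
  let ?S = "of_nat ` {..<p} :: 'a set"
  let ?R = "{z::'a. z ^ p + (-1) * z = 0}"
  have "inj_on (of_nat :: nat \<Rightarrow> 'a) {..<p}"
    by (rule inj_onI) (simp add: of_nat_eq_iff_cong_CHAR CHAR_eq cong_def)
  then have "card ?S = p"
    by (simp add: card_image)
  moreover have "card ?R \<le> p"
    by (rule card_roots_power_plus_linear_le[OF p_ge_2])
  moreover have "?S \<subseteq> ?R"
    using of_nat_power_p by auto
  moreover from this have "card ?S \<le> card ?R"
    by (intro card_mono) auto
  ultimately have "?S = ?R"
    by (intro card_subset_eq) auto
  then show ?thesis
    by auto
qed

lemma abs_trace_eq_of_nat: "\<exists>k. abs_trace (c::'a) = of_nat k"
  using abs_trace_power_p[of c] power_p_eq_self_iff by blast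

lemma can_add_char_eq:
  assumes "abs_trace (u::'a) = of_nat k"
  shows "can_add_char u = exp (2 * of_real pi * \<i> * of_nat k / of_nat p)"
proof -
  have "(THE k'. k' < p \<and> of_nat k' = abs_trace u) = k mod p"
    using p_ge_2 assms
    by (intro the_equality) (auto simp: of_nat_eq_iff_cong_CHAR CHAR_eq cong_def)
  then show ?thesis
    using p_ge_2 by (simp add: can_add_char_def CHAR_eq complex_root_unity_eq)
qed

lemma can_add_char_add: "can_add_char ((u::'a) + v) = can_add_char u * can_add_char v"
proof -
  obtain k l where k: "abs_trace u = of_nat k" and l: "abs_trace v = of_nat l"
    using abs_trace_eq_of_nat by metis
  then have kl: "abs_trace (u + v) = of_nat (k + l)"
    by (simp add: abs_trace_add)
  show ?thesis
    unfolding can_add_char_eq[OF k] can_add_char_eq[OF l] can_add_char_eq[OF kl]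
    by (simp add: add_divide_distrib distrib_left exp_add)
qed

lemma can_add_char_eq_1_iff: "can_add_char (u::'a) = 1 \<longleftrightarrow> abs_trace u = 0"
proof -
  obtain k where k: "abs_trace u = of_nat k"
    using abs_trace_eq_of_nat by metis
  have "can_add_char u = 1 \<longleftrightarrow> p dvd k"
    using p_ge_2 by (simp add: can_add_char_eq[OF k] complex_root_unity_eq_1)
  also have "\<dots> \<longleftrightarrow> abs_trace u = 0"
    by (simp add: k of_nat_eq_0_iff_char_dvd CHAR_eq)
  finally show ?thesis .
qed

lemma card_roots_additive_le:
  assumes "(c::'a) \<noteq> 0" "k > 0"
  shows "card {u::'a. (\<Sum>i<k. (u * c) ^ (p ^ i)) = 0} \<le> p ^ (k - 1)"
proof -
  define P where "P = (\<Sum>i<k. monom (c ^ (p ^ i)) (p ^ i))"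
  have p_power_inj: "p ^ i = p ^ j \<longleftrightarrow> i = j" for i j
    using p_ge_2 by (simp add: power_inject_exp)
  have coeff_P: "coeff P j = (\<Sum>i<k. if p ^ i = j then c ^ (p ^ i) else 0)" for j
    by (simp add: P_def coeff_sum coeff_monom)
  have "coeff P (p ^ (k - 1)) = c ^ (p ^ (k - 1))"
    unfolding coeff_P p_power_inj using assms(2) by (simp add: sum.delta)
  then have "P \<noteq> 0"
    using assms(1) by auto
  have "degree P \<le> p ^ (k - 1)"
  proof (rule degree_le, intro allI impI)
    fix j
    assume j: "p ^ (k - 1) < j"
    have "p ^ i \<le> p ^ (k - 1)" if "i < k" for i
      using that p_ge_2 by (intro power_increasing) auto
    then have "p ^ i < j" if "i < k" for i
      using that le_less_trans[OF _ j] by blast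
    then show "coeff P j = 0"
      unfolding coeff_P by (intro sum.neutral) auto
  qed
  moreover have "{u::'a. (\<Sum>i<k. (u * c) ^ (p ^ i)) = 0} = {u. poly P u = 0}"
    by (simp add: P_def poly_sum poly_monom power_mult_distrib mult.commute)
  ultimately show ?thesis
    using card_poly_roots_bound[OF \<open>P \<noteq> 0\<close>] by simp
qed

lemma abs_trace_not_identically_0: "\<exists>w::'a. abs_trace w \<noteq> 0"
proof (rule ccontr)
  assume "\<nexists>w::'a. abs_trace w \<noteq> 0"
  then have "UNIV = {u::'a. (\<Sum>i<n. (u * 1) ^ (p ^ i)) = 0}"
    by (auto simp: abs_trace_eq)
  then have "p ^ n \<le> p ^ (n - 1)"
    using card_roots_additive_le[of 1 n] degree_pos CARD_eq by simp
  moreover have "p ^ (n - 1) < p ^ n"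
    using p_ge_2 degree_pos by (intro power_strict_increasing) auto
  ultimately show False
    by simp
qed

lemma sum_can_add_char_additive_subgroup:
  assumes "finite S" "\<And>s t. s \<in> S \<Longrightarrow> t \<in> S \<Longrightarrow> s - t \<in> S"
  shows "(\<Sum>s\<in>S. can_add_char ((s::'a) * c)) =
    (if \<forall>s\<in>S. abs_trace (s * c) = 0 then of_nat (card S) else 0)"
proof (cases "\<forall>s\<in>S. abs_trace (s * c) = 0")
  case True
  then have "\<forall>s\<in>S. can_add_char (s * c) = 1"
    by (simp add: can_add_char_eq_1_iff)
  then show ?thesis
    using True by simp
next
  case False
  then obtain u where u: "u \<in> S" "can_add_char (u * c) \<noteq> 1"
    by (auto simp: can_add_char_eq_1_iff)
  have "0 \<in> S"
    using assms(2)[OF u(1) u(1)] by simp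
  then have plus_u: "s + u \<in> S" if "s \<in> S" for s
    using assms(2)[OF that assms(2)[OF \<open>0 \<in> S\<close> u(1)]] by simp
  have minus_u: "s - u \<in> S" if "s \<in> S" for s
    using assms(2)[OF that u(1)] .
  have "(\<Sum>s\<in>S. can_add_char (s * c)) = (\<Sum>s\<in>S. can_add_char ((s + u) * c))"
    by (rule sum.reindex_bij_witness[of _ "\<lambda>s. s + u" "\<lambda>s. s - u"]) (simp_all add: plus_u minus_u)
  also have "\<dots> = can_add_char (u * c) * (\<Sum>s\<in>S. can_add_char (s * c))"
    unfolding distrib_right can_add_char_add by (simp add: sum_distrib_left mult.commute)
  finally have "(1 - can_add_char (u * c)) * (\<Sum>s\<in>S. can_add_char (s * c)) = 0"
    by (simp add: algebra_simps)
  then show ?thesis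
    using False u(2) by auto
qed

lemma sum_can_add_char_additive_subgroup_nonzero:
  assumes "finite S" "\<And>s t. s \<in> S \<Longrightarrow> t \<in> S \<Longrightarrow> s - t \<in> S" "0 \<in> S"
  shows "(\<Sum>s\<in>S - {0}. can_add_char ((s::'a) * c)) =
    (if \<forall>s\<in>S. abs_trace (s * c) = 0 then of_nat (card S) - 1 else - 1)"
proof -
  have "can_add_char (0::'a) = 1"
    by (simp add: can_add_char_eq_1_iff abs_trace_0)
  then have "(\<Sum>s\<in>S. can_add_char (s * c)) = 1 + (\<Sum>s\<in>S - {0}. can_add_char (s * c))"
    using sum.remove[OF assms(1,3), of "\<lambda>s. can_add_char (s * c)"] by (simp only: mult_zero_left)
  then have "(\<Sum>s\<in>S - {0}. can_add_char (s * c)) = (\<Sum>s\<in>S. can_add_char (s * c)) - 1"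
    by simp
  also have "\<dots> = (if \<forall>s\<in>S. abs_trace (s * c) = 0 then of_nat (card S) - 1 else - 1)"
    using sum_can_add_char_additive_subgroup[OF assms(1,2), of c] by simp
  finally show ?thesis .
qed

lemma sum_can_add_char_nonzero:
  "(\<Sum>v\<in>{x::'a. x \<noteq> 0}. can_add_char (v * b)) = (if b = 0 then of_nat CARD('a) - 1 else - 1)"
proof -
  obtain w where w: "abs_trace (w::'a) \<noteq> 0"
    using abs_trace_not_identically_0 by blast
  have "(\<forall>s. abs_trace (s * b) = 0) \<longleftrightarrow> b = 0"
  proof
    assume trace_0: "\<forall>s. abs_trace (s * b) = 0"
    show "b = 0"
    proof (rule ccontr)
      assume "b \<noteq> 0"
      then have "abs_trace (w / b * b) \<noteq> 0"
        using w by simp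
      then show False
        using trace_0 by blast
    qed
  qed (simp add: abs_trace_0)
  moreover have "{x::'a. x \<noteq> 0} = UNIV - {0}"
    by auto
  ultimately show ?thesis
    using sum_can_add_char_additive_subgroup_nonzero[of UNIV b] by simp
qed

end

locale quadratic_prime_power_field = prime_power_field p "2 * m" field_type
  for p m :: nat and field_type :: "'a::{field,finite} itself"
begin

abbreviation q :: nat where "q \<equiv> p ^ m"

definition Fq :: "'a set" where "Fq = {y. y ^ q = y}"

lemma q_ge_2: "q \<ge> 2"
proof -
  have "p ^ 1 \<le> q"
    using p_ge_2 degree_pos by (intro power_increasing) auto
  then show ?thesis
    using p_ge_2 by simp
qed

lemma power_q_add: "((x::'a) + y) ^ q = x ^ q + y ^ q"
  by (rule power_p_power_add)

lemma power_q_diff: "((x::'a) - y) ^ q = x ^ q - y ^ q"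
  by (rule power_p_power_diff)

lemma power_q_q: "(x::'a) ^ (q * q) = x"
  using power_p_power_n_eq_self[of x] by (simp add: power_add [symmetric] mult_2)

lemma zero_mem_Fq: "0 \<in> Fq"
  using p_ge_2 by (simp add: Fq_def power_0_left)

lemma diff_mem_Fq: "x \<in> Fq \<Longrightarrow> y \<in> Fq \<Longrightarrow> x - y \<in> Fq"
  by (simp add: Fq_def power_q_diff)

lemma relative_trace_mem_Fq: "(w::'a) + w ^ q \<in> Fq"
  by (simp add: Fq_def power_q_add power_mult [symmetric] power_q_q)

lemma card_relative_trace_fibre_le: "card {w::'a. w + w ^ q = t} \<le> q"
proof (cases "\<exists>w0. w0 + w0 ^ q = t")
  case True
  then obtain w0 where w0: "w0 + w0 ^ q = t"
    by blast
  have "{w. w + w ^ q = t} \<subseteq> (\<lambda>z. z + w0) ` {z. z ^ q + 1 * z = 0}"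
  proof
    fix w
    assume "w \<in> {w. w + w ^ q = t}"
    then have "(w - w0) ^ q + 1 * (w - w0) = 0"
      using w0 by (simp add: power_q_diff algebra_simps)
    then show "w \<in> (\<lambda>z. z + w0) ` {z. z ^ q + 1 * z = 0}"
      by (intro image_eqI[of _ _ "w - w0"]) auto
  qed
  then have "card {w. w + w ^ q = t} \<le> card {z::'a. z ^ q + 1 * z = 0}"
    by (meson card_image_le card_mono finite le_trans)
  also have "\<dots> \<le> q"
    by (rule card_roots_power_plus_linear_le[OF q_ge_2])
  finally show ?thesis .
qed simp

text \<open>The fibres of the relative trace \<open>w \<mapsto> w + w ^ q\<close> have at most \<open>q\<close> elements, so its
  image, which lies in \<open>Fq\<close>, has at least \<open>q\<close> elements.\<close>
lemma card_Fq: "card Fq = q"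
proof (rule antisym)
  show "card Fq \<le> q"
    using card_roots_power_plus_linear_le[OF q_ge_2, of "- 1"] by (simp add: Fq_def)
next
  define g where "g w = w + w ^ q" for w :: 'a
  have "q * q = CARD('a)"
    by (simp add: CARD_eq power_add [symmetric] mult_2)
  also have "\<dots> = card (\<Union>t\<in>g ` UNIV. {w. g w = t})"
    by (rule arg_cong[of _ _ card]) auto
  also have "\<dots> \<le> (\<Sum>t\<in>g ` UNIV. card {w. g w = t})"
    by (rule card_UN_le) simp
  also have "\<dots> \<le> card (g ` UNIV) * q"
    using sum_bounded_above[of "g ` UNIV" "\<lambda>t. card {w. g w = t}" q]
      card_relative_trace_fibre_le by (simp add: g_def)
  finally have "q \<le> card (g ` UNIV)"
    using p_ge_2 by simp
  also have "\<dots> \<le> card Fq"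
    using relative_trace_mem_Fq by (intro card_mono) (auto simp: g_def)
  finally show "q \<le> card Fq" .
qed

lemma abs_trace_eq_relative: "abs_trace (w::'a) = (\<Sum>i<m. (w + w ^ q) ^ (p ^ i))"
proof -
  have "abs_trace w = (\<Sum>i<m. w ^ (p ^ i)) + (\<Sum>i<m. w ^ (p ^ (m + i)))"
    unfolding abs_trace_eq mult_2 by (rule sum_lessThan_add)
  also have "\<dots> = (\<Sum>i<m. (w + w ^ q) ^ (p ^ i))"
    by (simp add: power_p_power_add sum.distrib power_add power_mult)
  finally show ?thesis .
qed

lemma sum_can_add_char_Fq_nonzero:
  "(\<Sum>u\<in>Fq - {0}. can_add_char (u * a)) = (if a ^ q + a = 0 then of_nat q - 1 else - 1)"
proof -
  have trace_Fq: "abs_trace (u * a) = (\<Sum>i<m. (u * (a ^ q + a)) ^ (p ^ i))" if "u \<in> Fq" for u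
    using that by (simp add: abs_trace_eq_relative Fq_def power_mult_distrib algebra_simps)
  have "(\<forall>u\<in>Fq. abs_trace (u * a) = 0) \<longleftrightarrow> a ^ q + a = 0"
  proof
    assume all_0: "\<forall>u\<in>Fq. abs_trace (u * a) = 0"
    show "a ^ q + a = 0"
    proof (rule ccontr)
      assume "a ^ q + a \<noteq> 0"
      have "Fq \<subseteq> {u. (\<Sum>i<m. (u * (a ^ q + a)) ^ (p ^ i)) = 0}"
        using all_0 trace_Fq by auto
      then have "card Fq \<le> card {u. (\<Sum>i<m. (u * (a ^ q + a)) ^ (p ^ i)) = 0}"
        by (intro card_mono) auto
      then have "q \<le> p ^ (m - 1)"
        using card_roots_additive_le[OF \<open>a ^ q + a \<noteq> 0\<close>, of m] degree_pos card_Fq by simp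
      moreover have "p ^ (m - 1) < q"
        using p_ge_2 degree_pos by (intro power_strict_increasing) auto
      ultimately show False
        by simp
    qed
  qed (use p_ge_2 in \<open>simp add: trace_Fq power_0_left\<close>)
  then show ?thesis
    using sum_can_add_char_additive_subgroup_nonzero[of Fq a] diff_mem_Fq zero_mem_Fq card_Fq
    by (simp add: Fq_def)
qed

lemma mult_mem_Fq: "x \<in> Fq \<Longrightarrow> y \<in> Fq \<Longrightarrow> x * y \<in> Fq"
  by (simp add: Fq_def power_mult_distrib)

lemma inverse_mem_Fq: "x \<in> Fq \<Longrightarrow> inverse x \<in> Fq"
  by (simp add: Fq_def power_inverse)

lemma power_int_mem_Fq: "x \<in> Fq \<Longrightarrow> x powi k \<in> Fq"
proof -
  have "(x powi k) ^ q = (x ^ q) powi k"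
    by (simp add: power_int_power power_int_power' mult.commute)
  then show "x \<in> Fq \<Longrightarrow> x powi k \<in> Fq"
    by (simp add: Fq_def)
qed

lemma power_Suc_q_mem_Fq: "(x::'a) ^ (q + 1) \<in> Fq"
proof -
  have "(x ^ (q + 1)) ^ q = x ^ (q * q) * x ^ q"
    by (simp add: power_mult [symmetric] power_add algebra_simps)
  then show ?thesis
    by (simp add: Fq_def power_q_q)
qed

lemma nonzero_mem_Fq_iff:
  assumes "(x::'a) \<noteq> 0"
  shows "x \<in> Fq \<longleftrightarrow> x ^ (q - 1) = 1"
proof -
  have "Suc (q - 1) = q"
    using q_ge_2 by simp
  then have "x ^ q = x * x ^ (q - 1)"
    by (metis power_Suc)
  then show ?thesis
    using assms by (simp add: Fq_def)
qed

lemma mem_Fq_of_power_int_mem_Fq: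
  assumes "gcd (int q + 1) e = 1" "s \<noteq> 0" "s powi e \<in> Fq"
  shows "s \<in> Fq"
proof -
  define z where "z = s ^ (q - 1)"
  have "z powi e = (s powi e) ^ (q - 1)"
    by (simp add: z_def power_int_power power_int_power' mult.commute)
  also have "\<dots> = 1"
    using assms(2,3) nonzero_mem_Fq_iff by simp
  finally have "z powi e = 1" .
  have "int q + 1 = int (q + 1)"
    by simp
  then have "z powi (int q + 1) = s ^ ((q - 1) * (q + 1))"
    by (simp only: power_int_of_nat z_def power_mult)
  also have "\<dots> = s ^ (q * q - 1)"
    by (simp add: diff_mult_distrib algebra_simps)
  also have "\<dots> = 1"
    using p_ge_2 assms(2) by (intro power_pred_eq_1 power_q_q) auto
  finally have "z = 1"
    using power_int_eq_1_coprime[of z "int q + 1" e] \<open>z powi e = 1\<close> assms(1,2) by (simp add: z_def)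
  then show ?thesis
    using nonzero_mem_Fq_iff assms(2) by (simp add: z_def)
qed

lemma power_int_Suc_q_mult: "(x::'a) powi ((int q + 1) * k) = (x ^ (q + 1)) powi k"
proof -
  have "int q + 1 = int (q + 1)"
    by simp
  then show ?thesis
    by (simp only: power_int_power)
qed

definition twisted_power_map :: "int \<Rightarrow> int \<Rightarrow> 'a \<times> 'a \<Rightarrow> 'a \<times> 'a" where
  "twisted_power_map e1 e2 = (\<lambda>(y, x). (y * x powi ((int q + 1) * e1), y * x powi e2))"

lemma twisted_power_map_kernel:
  assumes "gcd (int q - 1) (2 * e1 - e2) = 1" "gcd (int q + 1) e2 = 1"
    and "r \<in> Fq" "r \<noteq> 0" "s \<noteq> 0"
    and "r * s powi ((int q + 1) * e1) = 1" "r * s powi e2 = 1"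
  shows "r = 1 \<and> s = 1"
proof -
  have "s powi e2 \<in> Fq"
    using inverse_unique[OF assms(7)] inverse_mem_Fq[OF assms(3)] by simp
  then have "s \<in> Fq"
    by (rule mem_Fq_of_power_int_mem_Fq[OF assms(2,5)])
  then have "s ^ (q + 1) = s ^ 2"
    by (simp add: Fq_def power2_eq_square)
  then have "s powi ((int q + 1) * e1) = s powi (2 * e1)"
    unfolding power_int_Suc_q_mult by (simp add: power_int_power)
  then have "r * s powi (2 * e1) = r * s powi e2"
    using assms(6,7) by simp
  then have "s powi (2 * e1) = s powi e2"
    using assms(4) by simp
  then have "s powi (2 * e1 - e2) = 1"
    using assms(5) by (simp add: power_int_diff)
  moreover have "s powi (int q - 1) = 1"
  proof -
    have "int q - 1 = int (q - 1)"
      using q_ge_2 by simp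
    moreover have "s ^ (q - 1) = 1"
      using \<open>s \<in> Fq\<close> nonzero_mem_Fq_iff[OF assms(5)] by simp
    ultimately show ?thesis
      by (simp only: power_int_of_nat)
  qed
  ultimately have "s = 1"
    using power_int_eq_1_coprime[OF assms(5,1)] by simp
  then show ?thesis
    using assms(7) by simp
qed

lemma bij_betw_twisted_power_map:
  assumes "gcd (int q - 1) (2 * e1 - e2) = 1" "gcd (int q + 1) e2 = 1"
  shows "bij_betw (twisted_power_map e1 e2)
    ((Fq - {0}) \<times> {x. x \<noteq> 0}) ((Fq - {0}) \<times> {x. x \<noteq> 0})"
    (is "bij_betw ?\<Phi> ?A ?A")
proof -
  have "?\<Phi> z \<in> ?A" if "z \<in> ?A" for z
  proof -
    obtain y x where z: "z = (y, x)"
      by (cases z)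
    moreover have "y \<in> Fq" "y \<noteq> 0" "x \<noteq> 0"
      using that z by auto
    moreover have "x powi ((int q + 1) * e1) \<in> Fq"
      unfolding power_int_Suc_q_mult by (intro power_int_mem_Fq power_Suc_q_mem_Fq)
    ultimately show ?thesis
      by (auto simp: twisted_power_map_def intro: mult_mem_Fq)
  qed
  then have "?\<Phi> ` ?A \<subseteq> ?A"
    by (rule image_subsetI)
  moreover have "inj_on ?\<Phi> ?A"
  proof (rule inj_onI)
    fix z z'
    assume "z \<in> ?A" "z' \<in> ?A" and "?\<Phi> z = ?\<Phi> z'"
    then obtain y x y' x' where z: "z = (y, x)" "z' = (y', x')"
      and A: "y \<in> Fq" "y \<noteq> 0" "x \<noteq> 0" "y' \<in> Fq" "y' \<noteq> 0" "x' \<noteq> 0"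
      and "?\<Phi> (y, x) = ?\<Phi> (y', x')"
      by auto
    then have "y / y' * (x / x') powi ((int q + 1) * e1) = 1" "y / y' * (x / x') powi e2 = 1"
      by (simp_all add: twisted_power_map_def power_int_divide_distrib)
    moreover have "y / y' \<in> Fq"
      using A by (simp add: divide_inverse mult_mem_Fq inverse_mem_Fq)
    moreover have "y / y' \<noteq> 0" "x / x' \<noteq> 0"
      using A by simp_all
    ultimately have "y / y' = 1 \<and> x / x' = 1"
      by (intro twisted_power_map_kernel[OF assms])
    then show "z = z'"
      using A z by simp
  qed
  ultimately show ?thesis
    using endo_inj_surj[of ?A ?\<Phi>] by (simp add: bij_betw_def)
qed

lemma T_sum_eq_product:
  assumes "gcd (int q - 1) (2 * e1 - e2) = 1" "gcd (int q + 1) e2 = 1"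
  shows "T_sum q e1 e2 a b =
    (\<Sum>u\<in>Fq - {0}. can_add_char (u * a)) * (\<Sum>v\<in>{x::'a. x \<noteq> 0}. can_add_char (v * b))"
proof -
  let ?\<Phi> = "twisted_power_map e1 e2"
  let ?A = "(Fq - {0}) \<times> {x::'a. x \<noteq> 0}"
  let ?f = "\<lambda>(u, v). can_add_char (u * a + v * b)"
  have "{y::'a. y ^ q = y \<and> y \<noteq> 0} = Fq - {0}"
    by (auto simp: Fq_def)
  then have "T_sum q e1 e2 a b =
      (\<Sum>(y, x)\<in>?A. can_add_char (y * a * x powi ((int q + 1) * e1) + y * b * x powi e2))"
    by (simp add: T_sum_def sum.cartesian_product)
  also have "\<dots> = (\<Sum>z\<in>?A. ?f (?\<Phi> z))"
    by (rule sum.cong) (auto simp: twisted_power_map_def mult_ac)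
  also have "\<dots> = (\<Sum>z\<in>?A. ?f z)"
    by (rule sum.reindex_bij_betw[OF bij_betw_twisted_power_map[OF assms]])
  also have "\<dots> = (\<Sum>u\<in>Fq - {0}. can_add_char (u * a)) * (\<Sum>v\<in>{x. x \<noteq> 0}. can_add_char (v * b))"
    by (simp add: sum.cartesian_product can_add_char_add sum_product)
  finally show ?thesis .
qed

end

theorem corollary1:
  fixes q :: nat and e1 e2 :: int and a b :: "'a::{field,finite}"
  assumes "\<exists>p k. prime p \<and> k > 0 \<and> q = p ^ k"
    and "CARD('a) = q ^ 2"
    and "gcd (int q - 1) (2 * e1 - e2) = 1"
    and "gcd (int q + 1) e2 = 1"
  shows "(a = 0 \<and> b = 0 \<longrightarrow>
            T_sum q e1 e2 a b = (of_nat q - 1) * (of_nat q ^ 2 - 1))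
       \<and> (a ^ q + a \<noteq> 0 \<and> b = 0 \<longrightarrow>
            T_sum q e1 e2 a b = - (of_nat q ^ 2 - 1))
       \<and> (a ^ q + a = 0 \<and> b \<noteq> 0 \<longrightarrow>
            T_sum q e1 e2 a b = - (of_nat q - 1))
       \<and> (a ^ q + a \<noteq> 0 \<and> b \<noteq> 0 \<longrightarrow>
            T_sum q e1 e2 a b = 1)"
proof -
  obtain p m where "prime p" and q: "q = p ^ m"
    using assms(1) by blast
  moreover have "CARD('a) = p ^ (2 * m)"
    using assms(2) q by (simp add: power_mult [symmetric] mult.commute)
  ultimately interpret quadratic_prime_power_field p m "TYPE('a)"
    by unfold_locales
  have "T_sum q e1 e2 a b = (if a ^ q + a = 0 then of_nat q - 1 else - 1) *
      (if b = 0 then of_nat q ^ 2 - 1 else - 1)"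
    using T_sum_eq_product[OF assms(3,4)[unfolded q]] sum_can_add_char_Fq_nonzero[of a]
      sum_can_add_char_nonzero[of b] assms(2) by (simp add: q)
  moreover have "a = 0 \<Longrightarrow> a ^ q + a = 0"
    using p_ge_2 by (simp add: q)
  ultimately show ?thesis
    by auto
qed

end
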